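(* Let $A$ be an essential arrangement of affine hyperplanes in a real affine space $V$, $f_0$ a non-constant affine-linear function, and for large $t$ let $A_t=A\cup\{\{f_0=t\}\}$. Let $H=\{f=0\}\in A$, let $\Delta$ be a growing domain of $A$ on which $|f|$ is unbounded, and let $\Delta_t=\Delta\cap\{f_0<t\}$. Let $\alpha\in\mathbb C$ and let $g=\exp(\alpha(\log|f|+i\theta))$ be a branch of $f^\alpha$ on $\Delta$, where $\theta$ is a real constant. Then, as $t\to+\infty$, $$c(g,\Delta_t)=c(g,\Delta,f_0)\,t^{\alpha}(1+o(1)),$$ where $t^\alpha=e^{\alpha\log t}$ with real $\log t$.
   Context: Domains and faces are as usual, and a domain is growing if it is unbounded and $f_0\to+\infty$ at infinity in it. $c(g,\Delta_t)$ is the value of $g$ on the external support of the bounded domain $\Delta_t$ of $A_t$ with respect to $f$; the external support of a bounded face $D$ with respect to an affine function $g$ is the face of highest dimension in the set of points of $\bar D$ where $|g|$ is maximal. Let $W=H_\infty\setminus\overline{\{f_0=0\}}$ in the projective completion $\bar V=V\cup H_\infty$, and $h([v])=f^0(v)/f_0^0(v)$ on $W$, with $f^0$ the linear part. $tr(\Delta)$ is the face of highest dimension among the faces of $\bar A$ lying in $H_\infty$ and contained in the closure of $\Delta$ in $\bar V$; it is a bounded face of the arrangement in $W$ of the non-constant functions $f_i^0/f_0^0$. Let $\Sigma'$ be the external support of $tr(\Delta)$ with respect to $h$. Then $c(g,\Delta,f_0)=\exp(\alpha(\log|h(\Sigma')|+i\theta))$. *)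

theory Defs
  imports "HOL-Analysis.Analysis"
begin

definition afn :: "('v::euclidean_space \<times> real) \<Rightarrow> 'v \<Rightarrow> real" where
  "afn p x = fst p \<bullet> x + snd p"

definition arrangement :: "('v::euclidean_space \<times> real) set \<Rightarrow> bool" where
  "arrangement A \<longleftrightarrow> finite A \<and> (\<forall>p\<in>A. fst p \<noteq> 0)"

definition hyperplanes :: "('v::euclidean_space \<times> real) set \<Rightarrow> 'v set set" where
  "hyperplanes A = (\<lambda>p. {x. afn p x = 0}) ` A"

definition essential :: "('v::euclidean_space \<times> real) set \<Rightarrow> bool" where
  "essential A \<longleftrightarrow> span (fst ` A) = UNIV"

definition domains :: "('v::euclidean_space \<times> real) set \<Rightarrow> 'v set set" where
  "domains A = components (- \<Union>(hyperplanes A))"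

definition arr_faces :: "'v set \<Rightarrow> ('v \<Rightarrow> real) set \<Rightarrow> 'v set set" where
  "arr_faces X Fs = {F. \<exists>x\<in>X. F = {y\<in>X. \<forall>\<phi>\<in>Fs. sgn (\<phi> y) = sgn (\<phi> x)}}"

definition faces :: "('v::euclidean_space \<times> real) set \<Rightarrow> 'v set set" where
  "faces A = arr_faces UNIV (afn ` A)"

definition add_level :: "('v::euclidean_space \<times> real) set \<Rightarrow> ('v \<times> real) \<Rightarrow> real
    \<Rightarrow> ('v \<times> real) set" where
  "add_level A f0 t = insert (fst f0, snd f0 - t) A"

definition growing :: "('v::euclidean_space \<times> real) set \<Rightarrow> ('v \<times> real) \<Rightarrow> 'v set \<Rightarrow> bool" where
  "growing A f0 D \<longleftrightarrow> D \<in> domains A \<and> \<not> bounded D \<and>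
     (\<forall>M. \<exists>R. \<forall>x\<in>D. norm x \<ge> R \<longrightarrow> afn f0 x \<ge> M)"

definition max_abs_set :: "'v::euclidean_space set \<Rightarrow> ('v \<Rightarrow> real) \<Rightarrow> 'v set" where
  "max_abs_set D \<phi> = {x\<in>closure D. \<forall>y\<in>closure D. \<bar>\<phi> y\<bar> \<le> \<bar>\<phi> x\<bar>}"

definition ext_support :: "'v::euclidean_space set set \<Rightarrow> 'v set \<Rightarrow> ('v \<Rightarrow> real) \<Rightarrow> 'v set" where
  "ext_support Fcs D \<phi> = (SOME F. F \<in> Fcs \<and> F \<subseteq> max_abs_set D \<phi> \<and>
      (\<forall>F'\<in>Fcs. F' \<subseteq> max_abs_set D \<phi> \<longrightarrow> aff_dim F' \<le> aff_dim F))"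

definition face_value :: "'v set \<Rightarrow> ('v \<Rightarrow> 'b) \<Rightarrow> 'b" where
  "face_value F \<psi> = \<psi> (SOME x. x \<in> F)"

definition c_bdd :: "('v::euclidean_space \<Rightarrow> complex) \<Rightarrow> ('v \<times> real) set \<Rightarrow> ('v \<times> real)
    \<Rightarrow> 'v set \<Rightarrow> complex" where
  "c_bdd g B f D = face_value (ext_support (faces B) D (afn f)) g"

text \<open>Hyperplane at infinity: the part W = H_\<infinity> \ closure{f0 = 0} is identified with its
  standard affine chart {v. f0^0(v) = 1} (the point [v:0] with f0^0 v \<noteq> 0 is represented
  by v / f0^0 v).\<close>

definition chart :: "('v::euclidean_space \<times> real) \<Rightarrow> 'v set" where
  "chart f0 = {v. fst f0 \<bullet> v = 1}"

text \<open>Points of W in the closure of D in the projective completion: [v:0] is a limit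
  of points [x_n : 1] with x_n \<in> D iff some scalars \<lambda>_n give \<lambda>_n (x_n,1) \<rightarrow> (v,0).\<close>

definition inf_closure :: "('v::euclidean_space \<times> real) \<Rightarrow> 'v set \<Rightarrow> 'v set" where
  "inf_closure f0 D = {v\<in>chart f0. \<exists>x lam. (\<forall>n. x n \<in> D) \<and> lam \<longlonglongrightarrow> 0 \<and>
      (\<lambda>n. lam n *\<^sub>R x n) \<longlonglongrightarrow> v}"

definition hratio :: "('v::euclidean_space \<times> real) \<Rightarrow> ('v \<times> real) \<Rightarrow> 'v \<Rightarrow> real" where
  "hratio f f0 v = (fst f \<bullet> v) / (fst f0 \<bullet> v)"

definition W_fns :: "('v::euclidean_space \<times> real) set \<Rightarrow> ('v \<times> real) \<Rightarrow> ('v \<Rightarrow> real) set" where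
  "W_fns A f0 = {hratio p f0 | p. p \<in> A \<and> \<not> (\<exists>c. \<forall>v\<in>chart f0. hratio p f0 v = c)}"

definition W_faces :: "('v::euclidean_space \<times> real) set \<Rightarrow> ('v \<times> real) \<Rightarrow> 'v set set" where
  "W_faces A f0 = arr_faces (chart f0) (W_fns A f0)"

definition trace_inf :: "('v::euclidean_space \<times> real) set \<Rightarrow> ('v \<times> real) \<Rightarrow> 'v set \<Rightarrow> 'v set" where
  "trace_inf A f0 D = (SOME F. F \<in> W_faces A f0 \<and> F \<subseteq> inf_closure f0 D \<and>
      (\<forall>F'\<in>W_faces A f0. F' \<subseteq> inf_closure f0 D \<longrightarrow> aff_dim F' \<le> aff_dim F))"

definition c_inf :: "complex \<Rightarrow> real \<Rightarrow> ('v::euclidean_space \<times> real) set \<Rightarrow> ('v \<times> real)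
    \<Rightarrow> ('v \<times> real) \<Rightarrow> 'v set \<Rightarrow> complex" where
  "c_inf \<alpha> \<theta> A f f0 D =
     (let \<Sigma>' = ext_support (W_faces A f0) (trace_inf A f0 D) (hratio f f0)
      in exp (\<alpha> * (complex_of_real (ln \<bar>face_value \<Sigma>' (hratio f f0)\<bar>) + \<i> * complex_of_real \<theta>)))"

end

theory Submission
  imports Defs
begin

(* The domain is the open chamber cut out by the hyperplanes of A, oriented towards it. Its
   directions at infinity, normalised by f0^0 = 1, form a compact convex set K (asym_dirs),
   which is the part of W in its projective closure; tr(Delta) is the face of the arrangement
   in W through the relative interior of K, hence dense in K, and
   c(g, Delta, f0) = exp(alpha (log M + i theta)) with M (growth_rate) the maximum of |f^0|
   on K.
   An external support consists of maximisers of the absolute value: the face of a maximiser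
   stays in the closed domain, and the absolute value cannot grow along it. So
   c(g, Delta_t) = exp(alpha (log m(t) + i theta)) with m(t) (level_max t) the maximum of |f|
   on the closure of Delta_t. The ray from a point of Delta in a maximising direction gives
   m(t) >= M t - O(1). The linear forms M f0^0 - f^0 and M f0^0 + f^0 are nonnegative on the
   recession cone, so by Farkas' lemma they are bounded below on Delta: |f| <= M f0 + O(1)
   there, and m(t) <= M t + O(1). Hence
   c(g, Delta_t) / (c(g, Delta, f0) t^alpha) = exp(alpha log(m(t) / (M t))) tends to 1. *)

section \<open>Faces on which the maximum of an absolute value is attained\<close>

definition affine_on :: "'a::real_vector set \<Rightarrow> ('a \<Rightarrow> real) \<Rightarrow> bool" where
  "affine_on X \<psi> \<longleftrightarrow>
     (\<forall>x\<in>X. \<forall>z\<in>X. \<forall>u. \<psi> ((1 - u) *\<^sub>R x + u *\<^sub>R z) = (1 - u) * \<psi> x + u * \<psi> z)"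

lemma nonneg_mult_if_sgn_eq:
  fixes a b c :: real
  assumes "sgn a = sgn b" "0 \<le> c * b"
  shows "0 \<le> c * a"
  using assms by (auto simp: sgn_if zero_le_mult_iff split: if_splits)

lemma abs_le_abs_if_extension:
  fixes a b e :: real
  assumes "0 < e" "\<bar>(1 + e) * a - e * b\<bar> \<le> \<bar>a\<bar>"
  shows "\<bar>a\<bar> \<le> \<bar>b\<bar>"
proof -
  have "(1 + e) * \<bar>a\<bar> \<le> \<bar>(1 + e) * a - e * b\<bar> + e * \<bar>b\<bar>"
    using assms(1) abs_triangle_ineq[of "(1 + e) * a - e * b" "e * b"] by (simp add: abs_mult)
  then have "e * \<bar>a\<bar> \<le> e * \<bar>b\<bar>" using assms(2) by (simp add: distrib_right)
  then show ?thesis using assms(1) by simp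
qed

lemma eventually_sgn_extension:
  fixes a b :: real
  assumes "sgn a = sgn b"
  shows "\<forall>\<^sub>F e in at_right 0. sgn ((1 + e) * a - e * b) = sgn a"
proof (cases "a = 0")
  case True
  then show ?thesis using assms by (simp add: sgn_0_0)
next
  case False
  have "((\<lambda>e. (1 + e) * a - e * b) \<longlongrightarrow> (1 + 0) * a - 0 * b) (at_right 0)"
    by (intro tendsto_intros)
  then have "\<forall>\<^sub>F e in at_right 0. dist ((1 + e) * a - e * b) a < \<bar>a\<bar>"
    using False by (simp add: tendsto_iff)
  then show ?thesis
    by eventually_elim (auto simp: dist_real_def sgn_if split: if_splits)
qed

lemma someI_max_aff_dim:
  fixes Fcs :: "'v::euclidean_space set set"
  assumes "F \<in> Fcs" "P F"
  defines "G \<equiv> SOME F. F \<in> Fcs \<and> P F \<and> (\<forall>F'\<in>Fcs. P F' \<longrightarrow> aff_dim F' \<le> aff_dim F)"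
  shows "G \<in> Fcs \<and> P G \<and> (\<forall>F'\<in>Fcs. P F' \<longrightarrow> aff_dim F' \<le> aff_dim G)"
proof -
  let ?S = "{F\<in>Fcs. P F}"
  have "aff_dim ` ?S \<subseteq> {-1..int DIM('v)}"
    using aff_dim_geq aff_dim_le_DIM by fastforce
  then have fin: "finite (aff_dim ` ?S)" by (rule finite_subset) simp
  have "aff_dim ` ?S \<noteq> {}" using assms by blast
  then have "Max (aff_dim ` ?S) \<in> aff_dim ` ?S" using fin by (rule Max_in[rotated])
  then obtain H where H: "H \<in> ?S" "aff_dim H = Max (aff_dim ` ?S)" by force
  have "\<forall>F'\<in>Fcs. P F' \<longrightarrow> aff_dim F' \<le> aff_dim H"
    unfolding H(2) using fin by auto
  with H(1) have "\<exists>H. H \<in> Fcs \<and> P H \<and> (\<forall>F'\<in>Fcs. P F' \<longrightarrow> aff_dim F' \<le> aff_dim H)"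
    by blast
  then show ?thesis unfolding G_def by (rule someI_ex)
qed

lemma ext_support_subset_max_abs_set:
  fixes Fcs :: "'v::euclidean_space set set"
  assumes "F \<in> Fcs" "F \<subseteq> max_abs_set D \<phi>"
  shows "ext_support Fcs D \<phi> \<in> Fcs" "ext_support Fcs D \<phi> \<subseteq> max_abs_set D \<phi>"
  using someI_max_aff_dim[of F Fcs "\<lambda>F. F \<subseteq> max_abs_set D \<phi>", OF assms]
  unfolding ext_support_def by blast+

lemma max_abs_set_abs_eq:
  "y \<in> max_abs_set D \<phi> \<Longrightarrow> z \<in> max_abs_set D \<phi> \<Longrightarrow> \<bar>\<phi> z\<bar> = \<bar>\<phi> y\<bar>"
  unfolding max_abs_set_def using order_antisym by blast

lemma Sup_abs_eq_max_abs_set: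
  "y \<in> max_abs_set D \<phi> \<Longrightarrow> (SUP x\<in>closure D. \<bar>\<phi> x\<bar>) = \<bar>\<phi> y\<bar>"
  unfolding max_abs_set_def by (auto intro: cSup_eq_maximum)

lemma face_subset_max_abs_set:
  fixes \<phi> :: "'v::euclidean_space \<Rightarrow> real"
  assumes "finite Fs" "affine X" and aff: "\<forall>\<psi>\<in>insert \<phi> Fs. affine_on X \<psi>"
    and y: "y \<in> X" "y \<in> max_abs_set D \<phi>"
    and face: "{z\<in>X. \<forall>\<psi>\<in>Fs. sgn (\<psi> z) = sgn (\<psi> y)} \<subseteq> closure D"
  shows "{z\<in>X. \<forall>\<psi>\<in>Fs. sgn (\<psi> z) = sgn (\<psi> y)} \<subseteq> max_abs_set D \<phi>"
proof
  fix z assume z: "z \<in> {z\<in>X. \<forall>\<psi>\<in>Fs. sgn (\<psi> z) = sgn (\<psi> y)}"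
  \<comment> \<open>Going a little beyond y, away from z, stays in the face of y, and |\<phi>| grows there
    unless |\<phi> z| \<ge> |\<phi> y|.\<close>
  define w where "w e = (1 - (- e)) *\<^sub>R y + (- e) *\<^sub>R z" for e :: real
  have w_X: "w e \<in> X" for e
    using \<open>affine X\<close>[unfolded affine_def, rule_format, OF y(1), of z "1 - (- e)" "- e"] z
    unfolding w_def by simp
  have w_val: "\<psi> (w e) = (1 + e) * \<psi> y - e * \<psi> z" if "\<psi> \<in> insert \<phi> Fs" for \<psi> e
  proof -
    have "affine_on X \<psi>" using aff that by blast
    from this[unfolded affine_on_def, rule_format, OF y(1), of z "- e"] z
    show ?thesis unfolding w_def by simp
  qed
  have "\<forall>\<^sub>F e in at_right 0. \<forall>\<psi>\<in>Fs. sgn (\<psi> (w e)) = sgn (\<psi> y)"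
  proof (rule eventually_ball_finite[OF \<open>finite Fs\<close>], rule ballI)
    fix \<psi> assume "\<psi> \<in> Fs"
    then show "\<forall>\<^sub>F e in at_right 0. sgn (\<psi> (w e)) = sgn (\<psi> y)"
      using eventually_sgn_extension[of "\<psi> y" "\<psi> z"] z w_val by simp
  qed
  with eventually_at_right_less
  have "\<forall>\<^sub>F e in at_right 0. 0 < e \<and> (\<forall>\<psi>\<in>Fs. sgn (\<psi> (w e)) = sgn (\<psi> y))"
    by (rule eventually_conj)
  then obtain e where e: "0 < e" "\<forall>\<psi>\<in>Fs. sgn (\<psi> (w e)) = sgn (\<psi> y)"
    using eventually_happens'[OF trivial_limit_at_right_real] by blast
  then have "w e \<in> closure D" using face w_X by blast
  then have "\<bar>\<phi> (w e)\<bar> \<le> \<bar>\<phi> y\<bar>" using y(2) unfolding max_abs_set_def by blast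
  then have "\<bar>(1 + e) * \<phi> y - e * \<phi> z\<bar> \<le> \<bar>\<phi> y\<bar>" using w_val[of \<phi>] by simp
  with e(1) have "\<bar>\<phi> y\<bar> \<le> \<bar>\<phi> z\<bar>" by (rule abs_le_abs_if_extension)
  moreover have "z \<in> closure D" using face z by blast
  ultimately show "z \<in> max_abs_set D \<phi>"
    using y(2) unfolding max_abs_set_def by (auto intro: order_trans)
qed

lemma face_value_ext_support:
  fixes \<phi> :: "'v::euclidean_space \<Rightarrow> real"
  assumes "finite Fs" "affine X" "\<forall>\<psi>\<in>insert \<phi> Fs. affine_on X \<psi>"
    and "y \<in> X" "y \<in> max_abs_set D \<phi>"
    and "{z\<in>X. \<forall>\<psi>\<in>Fs. sgn (\<psi> z) = sgn (\<psi> y)} \<subseteq> closure D"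
  shows "\<exists>z\<in>max_abs_set D \<phi>. face_value (ext_support (arr_faces X Fs) D \<phi>) g = g z"
proof -
  let ?S = "ext_support (arr_faces X Fs) D \<phi>"
  have "{z\<in>X. \<forall>\<psi>\<in>Fs. sgn (\<psi> z) = sgn (\<psi> y)} \<in> arr_faces X Fs"
    unfolding arr_faces_def using \<open>y \<in> X\<close> by blast
  from ext_support_subset_max_abs_set[OF this face_subset_max_abs_set[OF assms]]
  have S: "?S \<in> arr_faces X Fs" "?S \<subseteq> max_abs_set D \<phi>" .
  then obtain x where "x \<in> ?S" unfolding arr_faces_def by blast
  then have "(SOME x. x \<in> ?S) \<in> ?S" by (rule someI)
  then show ?thesis unfolding face_value_def using S(2) by blast
qed

section \<open>Chambers of affine functions\<close>

lemma afn_comb: "afn p ((1 - u) *\<^sub>R x + u *\<^sub>R y) = (1 - u) * afn p x + u * afn p y"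
  unfolding afn_def by (simp add: inner_add_right algebra_simps)

lemma afn_ray: "afn p (x + r *\<^sub>R v) = afn p x + r * (fst p \<bullet> v)"
  unfolding afn_def by (simp add: inner_add_right algebra_simps)

lemma afn_scale: "afn (c *\<^sub>R fst p, c * snd p) x = c * afn p x"
  unfolding afn_def by (simp add: algebra_simps)

lemma continuous_on_afn [continuous_intros]: "continuous_on S (afn p)"
  unfolding afn_def by (intro continuous_intros)

lemma affine_on_afn: "affine_on X (afn p)"
  unfolding affine_on_def by (simp add: afn_comb)

definition chamber :: "('v::euclidean_space \<times> real) set \<Rightarrow> 'v set" where
  "chamber Q = {x. \<forall>q\<in>Q. 0 < afn q x}"

definition closed_chamber :: "('v::euclidean_space \<times> real) set \<Rightarrow> 'v set" where
  "closed_chamber Q = {x. \<forall>q\<in>Q. 0 \<le> afn q x}"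

definition rec_cone :: "('v::euclidean_space \<times> real) set \<Rightarrow> 'v set" where
  "rec_cone Q = {u. \<forall>q\<in>Q. 0 \<le> fst q \<bullet> u}"

lemma in_closure_if_segment:
  fixes z d :: "'a::euclidean_space"
  assumes "\<And>\<delta>. 0 < \<delta> \<Longrightarrow> \<delta> \<le> 1 \<Longrightarrow> (1 - \<delta>) *\<^sub>R z + \<delta> *\<^sub>R d \<in> S"
  shows "z \<in> closure S"
proof (cases "z = d")
  case True
  then show ?thesis using assms[of 1] closure_subset by force
next
  case False
  have "open_segment z d \<subseteq> S" using assms by (auto simp: in_segment)
  then have "closure (open_segment z d) \<subseteq> closure S" by (rule closure_mono)
  then show ?thesis using False by auto
qed

lemma closed_closed_chamber: "closed (closed_chamber Q)"
proof -
  have "closed_chamber Q = (\<Inter>q\<in>Q. {x. 0 \<le> afn q x})" unfolding closed_chamber_def by auto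
  then show ?thesis by (simp add: closed_INT closed_Collect_le continuous_on_afn)
qed

lemma closed_rec_cone: "closed (rec_cone Q)"
proof -
  have "rec_cone Q = (\<Inter>q\<in>Q. {u. 0 \<le> fst q \<bullet> u})" unfolding rec_cone_def by auto
  then show ?thesis
    by (simp add: closed_INT closed_Collect_le continuous_on_inner continuous_on_const
        continuous_on_id)
qed

lemma convex_chamber: "convex (chamber Q)"
proof -
  have "convex {x. 0 < afn q x}" for q
  proof -
    have "{x. 0 < afn q x} = {x. fst q \<bullet> x > - snd q}" by (auto simp: afn_def)
    then show ?thesis by (simp add: convex_halfspace_gt)
  qed
  moreover have "chamber Q = (\<Inter>q\<in>Q. {x. 0 < afn q x})" unfolding chamber_def by auto
  ultimately show ?thesis by (metis convex_INT)
qed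

lemma convex_rec_cone: "convex (rec_cone Q)"
proof -
  have "rec_cone Q = (\<Inter>q\<in>Q. {u. fst q \<bullet> u \<ge> 0})" unfolding rec_cone_def by auto
  then show ?thesis by (metis convex_INT convex_halfspace_ge)
qed

lemma closure_chamber:
  assumes "d \<in> chamber Q"
  shows "closure (chamber Q) = closed_chamber Q"
proof
  have "chamber Q \<subseteq> closed_chamber Q"
    unfolding chamber_def closed_chamber_def by (auto simp: less_imp_le)
  then show "closure (chamber Q) \<subseteq> closed_chamber Q"
    by (rule closure_minimal[OF _ closed_closed_chamber])
  show "closed_chamber Q \<subseteq> closure (chamber Q)"
  proof
    fix z assume z: "z \<in> closed_chamber Q"
    show "z \<in> closure (chamber Q)"
    proof (rule in_closure_if_segment)
      fix \<delta> :: real assume "0 < \<delta>" "\<delta> \<le> 1"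
      have "0 < (1 - \<delta>) * afn q z + \<delta> * afn q d" if "q \<in> Q" for q
        using that z assms \<open>0 < \<delta>\<close> \<open>\<delta> \<le> 1\<close> unfolding chamber_def closed_chamber_def
        by (intro add_nonneg_pos) auto
      then show "(1 - \<delta>) *\<^sub>R z + \<delta> *\<^sub>R d \<in> chamber Q"
        unfolding chamber_def by (simp add: afn_comb)
    qed
  qed
qed

lemma chamber_insert: "chamber (insert q Q) = {x. 0 < afn q x} \<inter> chamber Q"
  unfolding chamber_def by blast

lemma closed_chamber_insert: "closed_chamber (insert q Q) = {x. 0 \<le> afn q x} \<inter> closed_chamber Q"
  unfolding closed_chamber_def by blast

lemma chamber_add_rec_cone:
  assumes "x \<in> chamber Q" "u \<in> rec_cone Q" "0 \<le> r"
  shows "x + r *\<^sub>R u \<in> chamber Q"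
  unfolding chamber_def
proof (intro CollectI ballI)
  fix q assume "q \<in> Q"
  then have "0 < afn q x" "0 \<le> r * (fst q \<bullet> u)"
    using assms unfolding chamber_def rec_cone_def by auto
  then show "0 < afn q (x + r *\<^sub>R u)" unfolding afn_ray by linarith
qed

lemma rec_cone_scaleR: "u \<in> rec_cone Q \<Longrightarrow> 0 \<le> c \<Longrightarrow> c *\<^sub>R u \<in> rec_cone Q"
  unfolding rec_cone_def by simp

lemma face_subset_closed_chamber:
  assumes multiple: "\<forall>q\<in>Q. \<exists>p\<in>B. \<exists>c. \<forall>x. afn q x = c * afn p x" and y: "y \<in> closed_chamber Q"
  shows "{z\<in>UNIV. \<forall>\<psi>\<in>afn ` B. sgn (\<psi> z) = sgn (\<psi> y)} \<subseteq> closed_chamber Q"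
proof
  fix z assume z: "z \<in> {z\<in>UNIV. \<forall>\<psi>\<in>afn ` B. sgn (\<psi> z) = sgn (\<psi> y)}"
  have "0 \<le> afn q z" if q: "q \<in> Q" for q
  proof -
    obtain p c where p: "p \<in> B" and c: "\<forall>x. afn q x = c * afn p x"
      using bspec[OF multiple q] by (elim bexE exE)
    have "\<forall>\<psi>\<in>afn ` B. sgn (\<psi> z) = sgn (\<psi> y)" using z by simp
    then have "sgn (afn p z) = sgn (afn p y)" using p by simp
    moreover have "0 \<le> afn q y" using y q unfolding closed_chamber_def by blast
    then have "0 \<le> c * afn p y" using c by simp
    ultimately have "0 \<le> c * afn p z" by (rule nonneg_mult_if_sgn_eq)
    then show ?thesis using c by simp
  qed
  then show "z \<in> closed_chamber Q" unfolding closed_chamber_def by blast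
qed

lemma farkas_convex_cone_hull:
  fixes w :: "'a::euclidean_space"
  assumes "finite G" and nonneg: "\<And>u. \<forall>g\<in>G. 0 \<le> g \<bullet> u \<Longrightarrow> 0 \<le> w \<bullet> u"
  shows "w \<in> convex_cone hull G"
proof (rule ccontr)
  assume "w \<notin> convex_cone hull G"
  then obtain a b where ab: "a \<bullet> w < b" "\<forall>x\<in>convex_cone hull G. b < a \<bullet> x"
    using separating_hyperplane_closed_point[OF convex_convex_cone_hull
        closed_convex_cone_hull[OF \<open>finite G\<close>]] by blast
  have "b < a \<bullet> 0" using ab(2) convex_cone_hull_contains_0 by blast
  then have "b < 0" by simp
  have "0 \<le> g \<bullet> a" if "g \<in> G" for g
  proof (rule ccontr)
    assume neg: "\<not> 0 \<le> g \<bullet> a"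
    have "0 \<le> b / (a \<bullet> g)" using neg \<open>b < 0\<close> by (simp add: inner_commute divide_nonpos_neg)
    then have "(b / (a \<bullet> g)) *\<^sub>R g \<in> convex_cone hull G"
      using that by (intro convex_cone_hull_mul hull_inc)
    then have "b < a \<bullet> ((b / (a \<bullet> g)) *\<^sub>R g)" using ab(2) by blast
    then show False using neg by (simp add: inner_commute)
  qed
  then have "0 \<le> w \<bullet> a" using nonneg by blast
  then show False using ab(1) \<open>b < 0\<close> by (simp add: inner_commute)
qed

lemma inner_bounded_below_closed_chamber:
  fixes w :: "'v::euclidean_space"
  assumes "finite Q" "\<forall>u\<in>rec_cone Q. 0 \<le> w \<bullet> u"
  shows "\<exists>c. \<forall>x\<in>closed_chamber Q. c \<le> w \<bullet> x"
proof -
  define B where "B = {w. \<exists>c. \<forall>x\<in>closed_chamber Q. c \<le> w \<bullet> x}"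
  have "convex_cone B" unfolding convex_cone_iff
  proof (intro conjI ballI allI impI)
    show "0 \<in> B" unfolding B_def by auto
  next
    fix v w assume "v \<in> B" "w \<in> B"
    then obtain c d where "\<forall>x\<in>closed_chamber Q. c \<le> v \<bullet> x" "\<forall>x\<in>closed_chamber Q. d \<le> w \<bullet> x"
      unfolding B_def by blast
    then have "\<forall>x\<in>closed_chamber Q. c + d \<le> (v + w) \<bullet> x" by (simp add: inner_add_left add_mono)
    then show "v + w \<in> B" unfolding B_def by blast
  next
    fix v and a :: real assume "v \<in> B" "0 \<le> a"
    then obtain c where "\<forall>x\<in>closed_chamber Q. c \<le> v \<bullet> x" unfolding B_def by blast
    then have "\<forall>x\<in>closed_chamber Q. a * c \<le> (a *\<^sub>R v) \<bullet> x"
      using \<open>0 \<le> a\<close> by (simp add: mult_left_mono)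
    then show "a *\<^sub>R v \<in> B" unfolding B_def by blast
  qed
  moreover have "fst ` Q \<subseteq> B"
  proof
    fix g assume "g \<in> fst ` Q"
    then obtain q where "q \<in> Q" "g = fst q" by blast
    then have "\<forall>x\<in>closed_chamber Q. - snd q \<le> g \<bullet> x"
      unfolding closed_chamber_def afn_def by auto
    then show "g \<in> B" unfolding B_def by blast
  qed
  ultimately have "convex_cone hull (fst ` Q) \<subseteq> B" by (rule hull_minimal[rotated])
  moreover have "w \<in> convex_cone hull (fst ` Q)"
    using assms by (intro farkas_convex_cone_hull) (auto simp: rec_cone_def)
  ultimately show ?thesis unfolding B_def by blast
qed

lemma bounded_rec_cone_slice:
  fixes a :: "'v::euclidean_space"
  assumes pos: "\<And>u. u \<in> rec_cone Q \<Longrightarrow> u \<noteq> 0 \<Longrightarrow> 0 < a \<bullet> u"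
  shows "bounded (rec_cone Q \<inter> {v. a \<bullet> v = 1})"
proof (cases "rec_cone Q \<inter> {v. a \<bullet> v = 1} = {}")
  case True
  then show ?thesis by simp
next
  case False
  let ?S = "rec_cone Q \<inter> sphere 0 1"
  have sgn_S: "sgn v \<in> ?S" if "v \<in> rec_cone Q \<inter> {v. a \<bullet> v = 1}" for v
  proof -
    have "sgn v \<in> rec_cone Q" unfolding sgn_div_norm using that by (intro rec_cone_scaleR) auto
    moreover have "v \<noteq> 0" using that by auto
    then have "norm (sgn v) = 1" by (simp add: norm_sgn)
    ultimately show ?thesis by simp
  qed
  then have "?S \<noteq> {}" using False by blast
  moreover have "compact ?S" by (rule closed_Int_compact[OF closed_rec_cone compact_sphere])
  moreover have "continuous_on ?S (\<lambda>u. a \<bullet> u)" by (intro continuous_intros)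
  ultimately obtain u0 where u0: "u0 \<in> ?S" "\<forall>u\<in>?S. a \<bullet> u0 \<le> a \<bullet> u"
    using continuous_attains_inf by blast
  have "u0 \<noteq> 0" using u0(1) by auto
  then have "0 < a \<bullet> u0" using pos u0(1) by blast
  have "norm v \<le> 1 / (a \<bullet> u0)" if v: "v \<in> rec_cone Q \<inter> {v. a \<bullet> v = 1}" for v
  proof -
    have "v \<noteq> 0" using v by auto
    have "a \<bullet> u0 \<le> a \<bullet> sgn v" using u0(2) sgn_S[OF v] by blast
    also have "\<dots> = inverse (norm v)" using v by (simp add: sgn_div_norm inner_commute[of a])
    finally show ?thesis using \<open>0 < a \<bullet> u0\<close> \<open>v \<noteq> 0\<close> by (simp add: field_simps)
  qed
  then show ?thesis unfolding bounded_iff by blast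
qed

lemma eventually_pos_if_scaled_tendsto_1:
  fixes lam g :: "nat \<Rightarrow> real"
  assumes "(\<lambda>n. lam n * g n) \<longlonglongrightarrow> 1" "lam \<longlonglongrightarrow> 0" "\<forall>n. L \<le> g n"
  shows "\<forall>\<^sub>F n in sequentially. 0 < lam n"
proof -
  have "\<forall>\<^sub>F n in sequentially. 1/2 < lam n * g n"
    using assms(1) by (rule order_tendstoD) simp
  moreover have "(\<lambda>n. \<bar>lam n\<bar> * (\<bar>L\<bar> + 1)) \<longlonglongrightarrow> \<bar>0\<bar> * (\<bar>L\<bar> + 1)"
    by (intro tendsto_intros assms(2))
  then have "\<forall>\<^sub>F n in sequentially. \<bar>lam n\<bar> * (\<bar>L\<bar> + 1) < 1/2"
    by (rule order_tendstoD) simp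
  ultimately show ?thesis
  proof eventually_elim
    case (elim n)
    show "0 < lam n"
    proof (rule ccontr)
      assume "\<not> 0 < lam n"
      then have "lam n * g n \<le> lam n * L" using assms(3) by (intro mult_left_mono_neg) auto
      also have "\<dots> \<le> \<bar>lam n\<bar> * \<bar>L\<bar>" by (metis abs_ge_self abs_mult)
      also have "\<dots> \<le> \<bar>lam n\<bar> * (\<bar>L\<bar> + 1)" by (simp add: mult_left_mono)
      finally show False using elim by linarith
    qed
  qed
qed

lemma chart_Int_rec_cone_subset_inf_closure:
  assumes x0: "x0 \<in> chamber Q"
  shows "chart f0 \<inter> rec_cone Q \<subseteq> inf_closure f0 (chamber Q)"
proof
  fix v assume v: "v \<in> chart f0 \<inter> rec_cone Q"
  define x where "x n = x0 + real (Suc n) *\<^sub>R v" for n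
  define lam where "lam n = inverse (real (Suc n))" for n
  have "x n \<in> chamber Q" for n
    unfolding x_def by (rule chamber_add_rec_cone[OF x0]) (use v in auto)
  moreover have "lam \<longlonglongrightarrow> 0" unfolding lam_def by (rule LIMSEQ_inverse_real_of_nat)
  moreover have "(\<lambda>n. lam n *\<^sub>R x n) \<longlonglongrightarrow> v"
  proof -
    have "(\<lambda>n. lam n *\<^sub>R x0 + v) \<longlonglongrightarrow> 0 *\<^sub>R x0 + v"
      by (intro tendsto_intros \<open>lam \<longlonglongrightarrow> 0\<close>)
    moreover have "lam n *\<^sub>R x n = lam n *\<^sub>R x0 + v" for n
      unfolding lam_def x_def by (simp add: scaleR_add_right)
    ultimately show ?thesis by simp
  qed
  ultimately show "v \<in> inf_closure f0 (chamber Q)"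
    using v unfolding inf_closure_def by blast
qed

lemma inf_closure_subset_chart_Int_rec_cone:
  assumes L: "\<forall>x\<in>chamber Q. L \<le> fst f0 \<bullet> x"
  shows "inf_closure f0 (chamber Q) \<subseteq> chart f0 \<inter> rec_cone Q"
proof
  fix v assume "v \<in> inf_closure f0 (chamber Q)"
  then obtain x lam where v: "v \<in> chart f0" and x: "\<forall>n. x n \<in> chamber Q"
    and "lam \<longlonglongrightarrow> 0" and lim_v: "(\<lambda>n. lam n *\<^sub>R x n) \<longlonglongrightarrow> v"
    unfolding inf_closure_def by blast
  have "(\<lambda>n. fst f0 \<bullet> (lam n *\<^sub>R x n)) \<longlonglongrightarrow> fst f0 \<bullet> v" by (intro tendsto_intros lim_v)
  then have "(\<lambda>n. lam n * (fst f0 \<bullet> x n)) \<longlonglongrightarrow> 1" using v unfolding chart_def by simp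
  then have lam_pos: "\<forall>\<^sub>F n in sequentially. 0 < lam n"
    using \<open>lam \<longlonglongrightarrow> 0\<close> L x by (intro eventually_pos_if_scaled_tendsto_1) auto
  have "0 \<le> fst q \<bullet> v" if q: "q \<in> Q" for q
  proof -
    have lim1: "(\<lambda>n. fst q \<bullet> (lam n *\<^sub>R x n)) \<longlonglongrightarrow> fst q \<bullet> v" by (intro tendsto_intros lim_v)
    have lim2: "(\<lambda>n. - (lam n * snd q)) \<longlonglongrightarrow> - (0 * snd q)"
      by (intro tendsto_intros \<open>lam \<longlonglongrightarrow> 0\<close>)
    have "\<forall>\<^sub>F n in sequentially. - (lam n * snd q) \<le> fst q \<bullet> (lam n *\<^sub>R x n)"
      using lam_pos
    proof eventually_elim
      case (elim n)
      have "0 < afn q (x n)" using x q unfolding chamber_def by blast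
      then have "0 \<le> lam n * afn q (x n)" using elim by simp
      then show ?case unfolding afn_def by (simp add: algebra_simps)
    qed
    from tendsto_le[OF sequentially_bot lim1 lim2 this] show ?thesis by simp
  qed
  then show "v \<in> chart f0 \<inter> rec_cone Q" using v unfolding rec_cone_def by blast
qed

lemma inner_eq_0_if_rel_interior:
  fixes S :: "'v::euclidean_space set"
  assumes "convex S" "\<forall>v\<in>S. 0 \<le> a \<bullet> v" "y \<in> rel_interior S" "a \<bullet> y = 0" "v \<in> S"
  shows "a \<bullet> v = 0"
proof -
  have "v \<in> affine hull S" using assms(5) by (rule hull_inc)
  then obtain e where e: "1 < e" "(1 - e) *\<^sub>R v + e *\<^sub>R y \<in> S"
    using convex_rel_interior_if2[OF assms(1,3)] by blast
  then have "0 \<le> a \<bullet> ((1 - e) *\<^sub>R v + e *\<^sub>R y)" using assms(2) by blast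
  then have "0 \<le> (1 - e) * (a \<bullet> v)" using assms(4) by (simp add: inner_add_right)
  then have "a \<bullet> v \<le> 0" using e(1) by (simp add: zero_le_mult_iff)
  then show ?thesis using assms(2,5) by (simp add: order_antisym)
qed

lemma aff_dim_Int_hyperplane_less:
  fixes S :: "'v::euclidean_space set"
  assumes "x \<in> S" "a \<bullet> x \<noteq> b"
  shows "aff_dim (S \<inter> {v. a \<bullet> v = b}) < aff_dim S"
proof (rule aff_dim_psubset)
  have "affine hull (S \<inter> {v. a \<bullet> v = b}) \<subseteq> {v. a \<bullet> v = b}"
    by (rule hull_minimal) (auto simp: affine_hyperplane)
  then have "x \<notin> affine hull (S \<inter> {v. a \<bullet> v = b})" using assms(2) by blast
  moreover have "x \<in> affine hull S" using assms(1) by (rule hull_inc)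
  moreover have "affine hull (S \<inter> {v. a \<bullet> v = b}) \<subseteq> affine hull S" by (simp add: hull_mono)
  ultimately show "affine hull (S \<inter> {v. a \<bullet> v = b}) \<subset> affine hull S" by auto
qed

lemma hratio_chart: "v \<in> chart f0 \<Longrightarrow> hratio p f0 v = fst p \<bullet> v"
  unfolding chart_def hratio_def by simp

lemma affine_on_hratio: "affine_on (chart f0) (hratio p f0)"
  unfolding affine_on_def
proof (intro ballI allI)
  fix x z and u :: real assume "x \<in> chart f0" "z \<in> chart f0"
  moreover have "(1 - u) *\<^sub>R x + u *\<^sub>R z \<in> chart f0"
    using calculation unfolding chart_def by (simp add: inner_add_right algebra_simps)
  ultimately show
    "hratio p f0 ((1 - u) *\<^sub>R x + u *\<^sub>R z) = (1 - u) * hratio p f0 x + u * hratio p f0 z"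
    by (simp add: hratio_chart inner_add_right)
qed

lemma affine_chart: "affine (chart f0)"
  unfolding chart_def by (rule affine_hyperplane)

lemma finite_W_fns: "finite A \<Longrightarrow> finite (W_fns A f0)"
proof -
  assume "finite A"
  moreover have "W_fns A f0 \<subseteq> (\<lambda>p. hratio p f0) ` A" unfolding W_fns_def by blast
  ultimately show ?thesis by (meson finite_imageI finite_subset)
qed

lemma tendsto_exp_ln_ratio:
  fixes m :: "real \<Rightarrow> real" and \<alpha> :: complex
  assumes lim: "((\<lambda>t. m t / t) \<longlongrightarrow> M) at_top" and "0 < M"
  shows "((\<lambda>t. exp (\<alpha> * complex_of_real (ln (m t) - ln M - ln t))) \<longlongrightarrow> 1) at_top"
proof -
  have "((\<lambda>t. ln (m t / t) - ln M) \<longlongrightarrow> ln M - ln M) at_top"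
    using \<open>0 < M\<close> by (intro tendsto_intros lim) auto
  then have "((\<lambda>t. complex_of_real (ln (m t / t) - ln M)) \<longlongrightarrow> complex_of_real 0) at_top"
    by (intro tendsto_of_real) simp
  then have "((\<lambda>t. exp (\<alpha> * complex_of_real (ln (m t / t) - ln M))) \<longlongrightarrow> exp (\<alpha> * 0)) at_top"
    by (intro tendsto_exp tendsto_mult tendsto_const) simp
  then have lim_exp: "((\<lambda>t. exp (\<alpha> * complex_of_real (ln (m t / t) - ln M))) \<longlongrightarrow> 1) at_top"
    by simp
  have "\<forall>\<^sub>F t in at_top. ln (m t / t) - ln M = ln (m t) - ln M - ln t"
    using order_tendstoD(1)[OF lim \<open>0 < M\<close>] eventually_gt_at_top[of 0]
    by eventually_elim (simp add: ln_div zero_less_divide_iff)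
  then have "\<forall>\<^sub>F t in at_top. exp (\<alpha> * complex_of_real (ln (m t / t) - ln M))
      = exp (\<alpha> * complex_of_real (ln (m t) - ln M - ln t))"
    by (rule eventually_mono) (simp only:)
  with lim_exp show ?thesis by (rule Lim_transform_eventually)
qed

lemma exp_ln_recombine:
  fixes \<alpha> :: complex
  shows "exp (\<alpha> * (complex_of_real a + \<i> * complex_of_real \<theta>)) * exp (\<alpha> * complex_of_real b)
      * exp (\<alpha> * complex_of_real (c - a - b))
    = exp (\<alpha> * (complex_of_real c + \<i> * complex_of_real \<theta>))"
proof -
  have "\<alpha> * (complex_of_real a + \<i> * complex_of_real \<theta>) + \<alpha> * complex_of_real b
      + \<alpha> * complex_of_real (c - a - b) = \<alpha> * (complex_of_real c + \<i> * complex_of_real \<theta>)"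
    by (simp add: algebra_simps)
  then show ?thesis by (simp flip: exp_add)
qed

section \<open>The growing domain\<close>

locale growing_domain =
  fixes A :: "('v::euclidean_space \<times> real) set" and f0 f :: "'v \<times> real" and \<Delta> :: "'v set"
  assumes arrangement: "arrangement A" and growing: "growing A f0 \<Delta>"
    and unbounded_f: "\<not> bounded ((\<lambda>x. \<bar>afn f x\<bar>) ` \<Delta>)"
begin

definition "base_point = (SOME x. x \<in> \<Delta>)"

definition "side p = sgn (afn p base_point)"

definition "walls = (\<lambda>p. (side p *\<^sub>R fst p, side p * snd p)) ` A"

definition "asym_dirs = chart f0 \<inter> rec_cone walls"

lemma finite_A: "finite A"
  using arrangement unfolding arrangement_def by blast

lemma finite_walls: "finite walls"
  unfolding walls_def using finite_A by simp

lemma Delta_component: "\<Delta> \<in> components (- \<Union>(hyperplanes A))"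
  using growing unfolding growing_def domains_def by blast

lemma base_point_in_Delta: "base_point \<in> \<Delta>"
proof -
  obtain x where "x \<in> \<Delta>" using in_components_nonempty[OF Delta_component] by blast
  then show ?thesis unfolding base_point_def by (rule someI)
qed

lemma afn_nonzero: "x \<in> \<Delta> \<Longrightarrow> p \<in> A \<Longrightarrow> afn p x \<noteq> 0"
  using in_components_subset[OF Delta_component] unfolding hyperplanes_def by blast

lemma side_cases: "p \<in> A \<Longrightarrow> side p = 1 \<or> side p = -1"
  using afn_nonzero[OF base_point_in_Delta] unfolding side_def by (auto simp: sgn_if)

lemma mem_chamber_walls: "x \<in> chamber walls \<longleftrightarrow> (\<forall>p\<in>A. 0 < side p * afn p x)"
  unfolding chamber_def walls_def by (simp add: afn_scale)

lemma mem_rec_cone_walls: "u \<in> rec_cone walls \<longleftrightarrow> (\<forall>p\<in>A. 0 \<le> side p * (fst p \<bullet> u))"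
  unfolding rec_cone_def walls_def by simp

lemma Delta_eq_chamber: "\<Delta> = chamber walls"
proof
  show "\<Delta> \<subseteq> chamber walls"
    unfolding mem_chamber_walls subset_iff
  proof (intro allI impI ballI)
    fix x p assume x: "x \<in> \<Delta>" and p: "p \<in> A"
    show "0 < side p * afn p x"
    proof (rule ccontr)
      assume "\<not> 0 < side p * afn p x"
      then have "afn p x < 0 \<and> 0 < afn p base_point \<or> 0 < afn p x \<and> afn p base_point < 0"
        using afn_nonzero[OF x p] afn_nonzero[OF base_point_in_Delta p] unfolding side_def
        by (auto simp: sgn_if split: if_splits)
      moreover have conn: "connected \<Delta>" using in_components_connected[OF Delta_component] .
      ultimately have "\<exists>z\<in>\<Delta>. fst p \<bullet> z = - snd p"
      proof (elim disjE conjE)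
        assume "afn p x < 0" "0 < afn p base_point"
        then show ?thesis
          using connected_ivt_hyperplane[OF conn x base_point_in_Delta, of "fst p" "- snd p"]
          unfolding afn_def by simp
      next
        assume "0 < afn p x" "afn p base_point < 0"
        then show ?thesis
          using connected_ivt_hyperplane[OF conn base_point_in_Delta x, of "fst p" "- snd p"]
          unfolding afn_def by simp
      qed
      then obtain z where "z \<in> \<Delta>" "afn p z = 0" unfolding afn_def by auto
      then show False using afn_nonzero p by blast
    qed
  qed
  have "chamber walls \<subseteq> - \<Union>(hyperplanes A)"
    unfolding hyperplanes_def mem_chamber_walls subset_iff by fastforce
  moreover have "\<Delta> \<inter> chamber walls \<noteq> {}"
    using base_point_in_Delta \<open>\<Delta> \<subseteq> chamber walls\<close> by blast
  ultimately show "chamber walls \<subseteq> \<Delta>"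
    using components_maximal[OF Delta_component convex_connected[OF convex_chamber]] by blast
qed

lemma closure_Delta: "closure \<Delta> = closed_chamber walls"
  using closure_chamber[of base_point walls] base_point_in_Delta
  by (simp add: Delta_eq_chamber[symmetric])

lemma Delta_add_rec_cone: "x \<in> \<Delta> \<Longrightarrow> u \<in> rec_cone walls \<Longrightarrow> 0 \<le> r \<Longrightarrow> x + r *\<^sub>R u \<in> \<Delta>"
  using chamber_add_rec_cone[of x walls u r] by (simp add: Delta_eq_chamber[symmetric])

lemma f0_pos_on_rec_cone:
  assumes "u \<in> rec_cone walls" "u \<noteq> 0"
  shows "0 < fst f0 \<bullet> u"
proof -
  obtain R where R: "\<forall>x\<in>\<Delta>. R \<le> norm x \<longrightarrow> afn f0 base_point + 1 \<le> afn f0 x"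
    using growing unfolding growing_def by blast
  define r where "r = (\<bar>R\<bar> + norm base_point) / norm u"
  have "0 \<le> r" unfolding r_def by simp
  have "norm (r *\<^sub>R u) = \<bar>R\<bar> + norm base_point" unfolding r_def using assms(2) by simp
  moreover have "norm (r *\<^sub>R u) - norm base_point \<le> norm (base_point + r *\<^sub>R u)"
    by (metis add.commute norm_diff_ineq)
  ultimately have "R \<le> norm (base_point + r *\<^sub>R u)" by linarith
  then have "afn f0 base_point + 1 \<le> afn f0 (base_point + r *\<^sub>R u)"
    using R Delta_add_rec_cone[OF base_point_in_Delta assms(1) \<open>0 \<le> r\<close>] by blast
  then have "1 \<le> r * (fst f0 \<bullet> u)" unfolding afn_ray by simp
  show ?thesis
  proof (rule ccontr)
    assume "\<not> 0 < fst f0 \<bullet> u"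
    then have "r * (fst f0 \<bullet> u) \<le> 0" using \<open>0 \<le> r\<close> by (simp add: mult_nonneg_nonpos)
    then show False using \<open>1 \<le> r * (fst f0 \<bullet> u)\<close> by linarith
  qed
qed

lemma inner_bounded_below_closure_Delta:
  "\<forall>u\<in>rec_cone walls. 0 \<le> w \<bullet> u \<Longrightarrow> \<exists>c. \<forall>x\<in>closure \<Delta>. c \<le> w \<bullet> x"
  unfolding closure_Delta by (rule inner_bounded_below_closed_chamber[OF finite_walls])

lemma f0_bounded_below: "\<exists>L. \<forall>x\<in>\<Delta>. L \<le> fst f0 \<bullet> x"
proof -
  have "0 \<le> fst f0 \<bullet> u" if "u \<in> rec_cone walls" for u
    using f0_pos_on_rec_cone[OF that] by (cases "u = 0") auto
  then obtain L where "\<forall>x\<in>closure \<Delta>. L \<le> fst f0 \<bullet> x"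
    using inner_bounded_below_closure_Delta by blast
  then show ?thesis using closure_subset by blast
qed

lemma rec_cone_not_orthogonal_f: "\<exists>u\<in>rec_cone walls. fst f \<bullet> u \<noteq> 0"
proof (rule ccontr)
  assume "\<not> ?thesis"
  then have "\<forall>u\<in>rec_cone walls. 0 \<le> fst f \<bullet> u" "\<forall>u\<in>rec_cone walls. 0 \<le> (- fst f) \<bullet> u"
    by auto
  then obtain c1 c2 where c: "\<forall>x\<in>closure \<Delta>. c1 \<le> fst f \<bullet> x" "\<forall>x\<in>closure \<Delta>. c2 \<le> (- fst f) \<bullet> x"
    using inner_bounded_below_closure_Delta by blast
  have "\<bar>afn f x\<bar> \<le> \<bar>c1\<bar> + \<bar>c2\<bar> + \<bar>snd f\<bar>" if "x \<in> \<Delta>" for x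
  proof -
    have "c1 \<le> fst f \<bullet> x" "c2 \<le> - (fst f \<bullet> x)" using c that closure_subset by auto
    then show ?thesis unfolding afn_def by linarith
  qed
  then have "bounded ((\<lambda>x. \<bar>afn f x\<bar>) ` \<Delta>)"
    unfolding bounded_iff by auto
  then show False using unbounded_f by contradiction
qed

lemma scaled_mem_asym_dirs:
  assumes "u \<in> rec_cone walls" "u \<noteq> 0"
  shows "(1 / (fst f0 \<bullet> u)) *\<^sub>R u \<in> asym_dirs"
  using f0_pos_on_rec_cone[OF assms] rec_cone_scaleR[OF assms(1)]
  unfolding asym_dirs_def chart_def by simp

lemma asym_dirs_nonempty: "asym_dirs \<noteq> {}"
  using rec_cone_not_orthogonal_f scaled_mem_asym_dirs by fastforce

lemma compact_asym_dirs: "compact asym_dirs"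
proof -
  have "asym_dirs = rec_cone walls \<inter> {v. fst f0 \<bullet> v = 1}"
    unfolding asym_dirs_def chart_def by blast
  moreover have "bounded (rec_cone walls \<inter> {v. fst f0 \<bullet> v = 1})"
    by (rule bounded_rec_cone_slice) (rule f0_pos_on_rec_cone)
  moreover have "closed (rec_cone walls \<inter> {v. fst f0 \<bullet> v = 1})"
    by (intro closed_Int closed_rec_cone closed_hyperplane)
  ultimately show ?thesis by (simp add: compact_eq_bounded_closed)
qed

lemma convex_asym_dirs: "convex asym_dirs"
  unfolding asym_dirs_def chart_def by (intro convex_Int convex_hyperplane convex_rec_cone)

lemma mem_asym_dirs: "v \<in> asym_dirs \<longleftrightarrow> v \<in> chart f0 \<and> (\<forall>p\<in>A. 0 \<le> side p * (fst p \<bullet> v))"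
  by (simp add: asym_dirs_def mem_rec_cone_walls)

lemma inf_closure_Delta: "inf_closure f0 \<Delta> = asym_dirs"
proof -
  obtain L where "\<forall>x\<in>\<Delta>. L \<le> fst f0 \<bullet> x" using f0_bounded_below by blast
  then have "inf_closure f0 \<Delta> \<subseteq> chart f0 \<inter> rec_cone walls"
    using inf_closure_subset_chart_Int_rec_cone[of walls L f0]
    by (simp add: Delta_eq_chamber[symmetric])
  moreover have "chart f0 \<inter> rec_cone walls \<subseteq> inf_closure f0 \<Delta>"
    using chart_Int_rec_cone_subset_inf_closure[of base_point walls f0] base_point_in_Delta
    by (simp add: Delta_eq_chamber[symmetric])
  ultimately show ?thesis unfolding asym_dirs_def by blast
qed

lemma sgn_dir_eq_side:
  assumes "v \<in> asym_dirs" "p \<in> A" "fst p \<bullet> v \<noteq> 0"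
  shows "sgn (fst p \<bullet> v) = side p"
proof -
  have "0 \<le> side p * (fst p \<bullet> v)" using assms(1,2) mem_asym_dirs by blast
  then show ?thesis using side_cases[OF assms(2)] assms(3) by (auto simp: sgn_if zero_le_mult_iff)
qed

lemma W_face_subset_asym_dirs:
  assumes y0: "y0 \<in> asym_dirs"
  shows "{y\<in>chart f0. \<forall>\<phi>\<in>W_fns A f0. sgn (\<phi> y) = sgn (\<phi> y0)} \<subseteq> asym_dirs"
proof
  fix y assume y: "y \<in> {y\<in>chart f0. \<forall>\<phi>\<in>W_fns A f0. sgn (\<phi> y) = sgn (\<phi> y0)}"
  have y0_chart: "y0 \<in> chart f0" and y_chart: "y \<in> chart f0"
    using y0 y unfolding asym_dirs_def by auto
  have "0 \<le> side p * (fst p \<bullet> y)" if p: "p \<in> A" for p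
  proof -
    have nonneg: "0 \<le> side p * (fst p \<bullet> y0)"
      using y0 p mem_asym_dirs by blast
    show ?thesis
    proof (cases "\<exists>c. \<forall>v\<in>chart f0. hratio p f0 v = c")
      case True
      then have "fst p \<bullet> y = fst p \<bullet> y0" using y_chart y0_chart hratio_chart by metis
      then show ?thesis using nonneg by simp
    next
      case False
      then have "hratio p f0 \<in> W_fns A f0" unfolding W_fns_def using p by blast
      then have "sgn (hratio p f0 y) = sgn (hratio p f0 y0)" using y by blast
      then have "sgn (fst p \<bullet> y) = sgn (fst p \<bullet> y0)"
        by (simp add: hratio_chart[OF y_chart] hratio_chart[OF y0_chart])
      then show ?thesis using nonneg by (rule nonneg_mult_if_sgn_eq)
    qed
  qed
  then show "y \<in> asym_dirs" using y_chart mem_asym_dirs by blast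
qed

definition "inner_point = (SOME g. g \<in> rel_interior asym_dirs)"

lemma inner_point_rel_interior: "inner_point \<in> rel_interior asym_dirs"
proof -
  have "rel_interior asym_dirs \<noteq> {}"
    using asym_dirs_nonempty rel_interior_eq_empty[OF convex_asym_dirs] by blast
  then show ?thesis unfolding inner_point_def by (metis ex_in_conv someI)
qed

lemma inner_point_in_asym_dirs: "inner_point \<in> asym_dirs"
  using inner_point_rel_interior rel_interior_subset by blast

lemma dir_eq_0_if_rel_interior:
  assumes "p \<in> A" "y \<in> rel_interior asym_dirs" "fst p \<bullet> y = 0" "v \<in> asym_dirs"
  shows "fst p \<bullet> v = 0"
proof -
  have nonneg: "\<forall>v\<in>asym_dirs. 0 \<le> (side p *\<^sub>R fst p) \<bullet> v"
    using assms(1) mem_asym_dirs by simp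
  have "(side p *\<^sub>R fst p) \<bullet> y = 0" using assms(3) by simp
  from inner_eq_0_if_rel_interior[OF convex_asym_dirs nonneg assms(2) this assms(4)]
  have "side p * (fst p \<bullet> v) = 0" by simp
  then show ?thesis using side_cases[OF assms(1)] by auto
qed

lemma sgn_dir_rel_interior:
  assumes "p \<in> A" "y \<in> rel_interior asym_dirs" "y' \<in> rel_interior asym_dirs"
  shows "sgn (fst p \<bullet> y) = sgn (fst p \<bullet> y')"
proof -
  have "y \<in> asym_dirs" "y' \<in> asym_dirs" using assms(2,3) rel_interior_subset by blast+
  then show ?thesis
    using dir_eq_0_if_rel_interior[OF assms(1,2)] dir_eq_0_if_rel_interior[OF assms(1,3)]
      sgn_dir_eq_side[OF _ assms(1)] by (metis sgn_0)
qed

definition "inf_face = {y\<in>chart f0. \<forall>\<phi>\<in>W_fns A f0. sgn (\<phi> y) = sgn (\<phi> inner_point)}"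

lemma inf_face_in_W_faces: "inf_face \<in> W_faces A f0"
  using inner_point_in_asym_dirs
  unfolding inf_face_def W_faces_def arr_faces_def asym_dirs_def by blast

lemma rel_interior_subset_inf_face: "rel_interior asym_dirs \<subseteq> inf_face"
proof
  fix y assume y: "y \<in> rel_interior asym_dirs"
  have chart: "y \<in> chart f0" "inner_point \<in> chart f0"
    using y rel_interior_subset inner_point_in_asym_dirs unfolding asym_dirs_def by blast+
  have "sgn (\<phi> y) = sgn (\<phi> inner_point)" if \<phi>: "\<phi> \<in> W_fns A f0" for \<phi>
  proof -
    obtain p where "p \<in> A" "\<phi> = hratio p f0" using \<phi> unfolding W_fns_def by blast
    then show ?thesis
      using sgn_dir_rel_interior[OF _ y inner_point_rel_interior] hratio_chart[OF chart(1)]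
        hratio_chart[OF chart(2)] by simp
  qed
  then show "y \<in> inf_face" unfolding inf_face_def using chart(1) by blast
qed

lemma inf_face_subset_asym_dirs: "inf_face \<subseteq> asym_dirs"
  unfolding inf_face_def by (rule W_face_subset_asym_dirs[OF inner_point_in_asym_dirs])

lemma closure_inf_face: "closure inf_face = asym_dirs"
proof
  show "closure inf_face \<subseteq> asym_dirs"
    using closure_minimal[OF inf_face_subset_asym_dirs compact_imp_closed[OF compact_asym_dirs]] .
  have "asym_dirs = closure (rel_interior asym_dirs)"
    using convex_closure_rel_interior[OF convex_asym_dirs]
      closure_closed[OF compact_imp_closed[OF compact_asym_dirs]] by simp
  then show "asym_dirs \<subseteq> closure inf_face"
    using closure_mono[OF rel_interior_subset_inf_face] by simp
qed

lemma sgn_dir_ne_inner_point: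
  assumes "v \<in> asym_dirs" "p \<in> A" "sgn (fst p \<bullet> v) \<noteq> sgn (fst p \<bullet> inner_point)"
  shows "fst p \<bullet> v = 0" "fst p \<bullet> inner_point \<noteq> 0"
proof -
  show "fst p \<bullet> inner_point \<noteq> 0"
    using dir_eq_0_if_rel_interior[OF assms(2) inner_point_rel_interior _ assms(1)] assms(3)
    by force
  then show "fst p \<bullet> v = 0"
    using sgn_dir_eq_side[OF assms(1,2)] sgn_dir_eq_side[OF inner_point_in_asym_dirs assms(2)]
      assms(3) by force
qed

lemma trace_inf_max:
  "trace_inf A f0 \<Delta> \<in> W_faces A f0" "trace_inf A f0 \<Delta> \<subseteq> asym_dirs"
  "F \<in> W_faces A f0 \<Longrightarrow> F \<subseteq> asym_dirs \<Longrightarrow> aff_dim F \<le> aff_dim (trace_inf A f0 \<Delta>)"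
  using someI_max_aff_dim[of inf_face "W_faces A f0" "\<lambda>F. F \<subseteq> asym_dirs"]
    inf_face_in_W_faces inf_face_subset_asym_dirs
  unfolding trace_inf_def inf_closure_Delta by auto

lemma trace_inf_eq: "trace_inf A f0 \<Delta> = inf_face"
proof (rule ccontr)
  \<comment> \<open>Another face inside asym_dirs lies in a hyperplane {fst p \<bullet> v = 0} missing
    inner_point, so its dimension is smaller than that of asym_dirs.\<close>
  let ?T = "trace_inf A f0 \<Delta>"
  assume ne: "?T \<noteq> inf_face"
  obtain t0 where t0: "t0 \<in> chart f0"
    and T_eq: "?T = {y\<in>chart f0. \<forall>\<phi>\<in>W_fns A f0. sgn (\<phi> y) = sgn (\<phi> t0)}"
    using trace_inf_max(1) unfolding W_faces_def arr_faces_def by blast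
  have "\<exists>\<phi>\<in>W_fns A f0. sgn (\<phi> t0) \<noteq> sgn (\<phi> inner_point)"
  proof (rule ccontr)
    assume "\<not> ?thesis"
    then have "?T = inf_face" unfolding T_eq inf_face_def by auto
    with ne show False ..
  qed
  then obtain p where p: "p \<in> A" "hratio p f0 \<in> W_fns A f0"
    and sgn_ne: "sgn (hratio p f0 t0) \<noteq> sgn (hratio p f0 inner_point)"
    unfolding W_fns_def by blast
  have "t0 \<in> asym_dirs" using trace_inf_max(2) t0 unfolding T_eq by blast
  moreover have "inner_point \<in> chart f0" using inner_point_in_asym_dirs mem_asym_dirs by blast
  ultimately have "sgn (fst p \<bullet> t0) \<noteq> sgn (fst p \<bullet> inner_point)"
    using sgn_ne t0 by (simp add: hratio_chart)
  with \<open>t0 \<in> asym_dirs\<close> p(1) have "fst p \<bullet> t0 = 0" "fst p \<bullet> inner_point \<noteq> 0"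
    by (rule sgn_dir_ne_inner_point)+
  have "?T \<subseteq> asym_dirs \<inter> {v. fst p \<bullet> v = 0}"
  proof
    fix y assume y: "y \<in> ?T"
    then have "y \<in> chart f0" "sgn (hratio p f0 y) = sgn (hratio p f0 t0)"
      using p(2) unfolding T_eq by blast+
    then have "fst p \<bullet> y = 0" using \<open>fst p \<bullet> t0 = 0\<close> t0 by (simp add: hratio_chart sgn_0_0)
    then show "y \<in> asym_dirs \<inter> {v. fst p \<bullet> v = 0}" using y trace_inf_max(2) by blast
  qed
  then have "aff_dim ?T \<le> aff_dim (asym_dirs \<inter> {v. fst p \<bullet> v = 0})" by (rule aff_dim_subset)
  also have "\<dots> < aff_dim asym_dirs"
    using inner_point_in_asym_dirs \<open>fst p \<bullet> inner_point \<noteq> 0\<close>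
    by (rule aff_dim_Int_hyperplane_less)
  also have "\<dots> = aff_dim inf_face" by (metis closure_inf_face closure_aff_dim)
  also have "\<dots> \<le> aff_dim ?T" using trace_inf_max(3) inf_face_in_W_faces inf_face_subset_asym_dirs .
  finally show False by simp
qed

lemma closure_trace_inf: "closure (trace_inf A f0 \<Delta>) = asym_dirs"
  by (simp add: trace_inf_eq closure_inf_face)

definition "max_dir = (SOME v. v \<in> asym_dirs \<and> (\<forall>w\<in>asym_dirs. \<bar>fst f \<bullet> w\<bar> \<le> \<bar>fst f \<bullet> v\<bar>))"

definition "growth_rate = \<bar>fst f \<bullet> max_dir\<bar>"

lemma max_dir_maximal: "max_dir \<in> asym_dirs" "w \<in> asym_dirs \<Longrightarrow> \<bar>fst f \<bullet> w\<bar> \<le> growth_rate"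
proof -
  have "continuous_on asym_dirs (\<lambda>v. \<bar>fst f \<bullet> v\<bar>)" by (intro continuous_intros)
  then have "\<exists>v. v \<in> asym_dirs \<and> (\<forall>w\<in>asym_dirs. \<bar>fst f \<bullet> w\<bar> \<le> \<bar>fst f \<bullet> v\<bar>)"
    using continuous_attains_sup[OF compact_asym_dirs asym_dirs_nonempty] by blast
  then have "max_dir \<in> asym_dirs \<and> (\<forall>w\<in>asym_dirs. \<bar>fst f \<bullet> w\<bar> \<le> \<bar>fst f \<bullet> max_dir\<bar>)"
    unfolding max_dir_def by (rule someI_ex)
  then show "max_dir \<in> asym_dirs" "w \<in> asym_dirs \<Longrightarrow> \<bar>fst f \<bullet> w\<bar> \<le> growth_rate"
    unfolding growth_rate_def by auto
qed

lemma abs_f_dir_le: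
  assumes "u \<in> rec_cone walls"
  shows "\<bar>fst f \<bullet> u\<bar> \<le> growth_rate * (fst f0 \<bullet> u)"
proof (cases "u = 0")
  case False
  have pos: "0 < fst f0 \<bullet> u" using f0_pos_on_rec_cone[OF assms False] .
  have "\<bar>fst f \<bullet> u\<bar> / (fst f0 \<bullet> u) = \<bar>fst f \<bullet> ((1 / (fst f0 \<bullet> u)) *\<^sub>R u)\<bar>"
    using pos by (simp add: abs_div)
  also have "\<dots> \<le> growth_rate" using max_dir_maximal(2)[OF scaled_mem_asym_dirs[OF assms False]] .
  finally show ?thesis using pos by (simp add: divide_le_eq)
qed simp

lemma growth_rate_pos: "0 < growth_rate"
proof -
  obtain u where u: "u \<in> rec_cone walls" "fst f \<bullet> u \<noteq> 0" using rec_cone_not_orthogonal_f by blast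
  then have "u \<noteq> 0" by auto
  have "0 < \<bar>fst f \<bullet> u\<bar>" using u(2) by simp
  also have "\<dots> \<le> growth_rate * (fst f0 \<bullet> u)" using abs_f_dir_le[OF u(1)] .
  finally show ?thesis using f0_pos_on_rec_cone[OF u(1) \<open>u \<noteq> 0\<close>] by (simp add: zero_less_mult_iff)
qed

lemma abs_f_le: "\<exists>C. \<forall>x\<in>closure \<Delta>. \<bar>afn f x\<bar> \<le> growth_rate * afn f0 x + C"
proof -
  have "0 \<le> (growth_rate *\<^sub>R fst f0 - fst f) \<bullet> u \<and> 0 \<le> (growth_rate *\<^sub>R fst f0 + fst f) \<bullet> u"
    if "u \<in> rec_cone walls" for u
    using abs_f_dir_le[OF that] by (simp add: inner_diff_left inner_add_left abs_le_iff)
  then obtain c1 c2 where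
    c1: "\<forall>x\<in>closure \<Delta>. c1 \<le> (growth_rate *\<^sub>R fst f0 - fst f) \<bullet> x" and
    c2: "\<forall>x\<in>closure \<Delta>. c2 \<le> (growth_rate *\<^sub>R fst f0 + fst f) \<bullet> x"
    using inner_bounded_below_closure_Delta by meson
  have "\<bar>afn f x\<bar> \<le> growth_rate * afn f0 x + (\<bar>c1\<bar> + \<bar>c2\<bar> + \<bar>snd f\<bar> + growth_rate * \<bar>snd f0\<bar>)"
    if "x \<in> closure \<Delta>" for x
  proof -
    have "c1 \<le> growth_rate * (fst f0 \<bullet> x) - fst f \<bullet> x" "c2 \<le> growth_rate * (fst f0 \<bullet> x) + fst f \<bullet> x"
      using c1 c2 that by (auto simp: inner_diff_left inner_add_left)
    moreover have "growth_rate * (- \<bar>snd f0\<bar>) \<le> growth_rate * snd f0"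
      using growth_rate_pos by (intro mult_left_mono) auto
    ultimately show ?thesis unfolding afn_def by (simp add: distrib_left)
  qed
  then show ?thesis by blast
qed

lemma c_inf_eq:
  "c_inf \<alpha> \<theta> A f f0 \<Delta> = exp (\<alpha> * (complex_of_real (ln growth_rate) + \<i> * complex_of_real \<theta>))"
proof -
  let ?h = "hratio f f0" and ?T = "trace_inf A f0 \<Delta>"
  have max_dir_chart: "max_dir \<in> chart f0" using max_dir_maximal(1) mem_asym_dirs by blast
  have "max_dir \<in> max_abs_set ?T ?h"
    using max_dir_maximal max_dir_chart unfolding max_abs_set_def closure_trace_inf
    by (auto simp: hratio_chart mem_asym_dirs growth_rate_def)
  moreover have "{z\<in>chart f0. \<forall>\<psi>\<in>W_fns A f0. sgn (\<psi> z) = sgn (\<psi> max_dir)} \<subseteq> closure ?T"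
    unfolding closure_trace_inf by (rule W_face_subset_asym_dirs[OF max_dir_maximal(1)])
  moreover have "\<forall>\<psi>\<in>insert ?h (W_fns A f0). affine_on (chart f0) \<psi>"
    unfolding W_fns_def using affine_on_hratio by blast
  ultimately obtain z where z: "z \<in> max_abs_set ?T ?h"
    and val: "face_value (ext_support (W_faces A f0) ?T ?h) ?h = ?h z"
    using face_value_ext_support[OF finite_W_fns[OF finite_A] affine_chart _ max_dir_chart]
    unfolding W_faces_def by blast
  have "\<bar>?h z\<bar> = growth_rate"
    using max_abs_set_abs_eq[OF \<open>max_dir \<in> max_abs_set ?T ?h\<close> z] max_dir_chart
    by (simp add: hratio_chart growth_rate_def)
  then show ?thesis unfolding c_inf_def Let_def val by simp
qed

lemma Delta_below_eq_chamber:
  "\<Delta> \<inter> {x. afn f0 x < t} = chamber (insert (- fst f0, t - snd f0) walls)"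
proof -
  have "{x. 0 < afn (- fst f0, t - snd f0) x} = {x. afn f0 x < t}" by (auto simp: afn_def)
  then show ?thesis by (simp add: chamber_insert Delta_eq_chamber[symmetric] Int_commute)
qed

lemma closure_Delta_below_eq_closed_chamber:
  assumes "afn f0 base_point < t"
  shows "closure (\<Delta> \<inter> {x. afn f0 x < t}) = closed_chamber (insert (- fst f0, t - snd f0) walls)"
  using closure_chamber[of base_point "insert (- fst f0, t - snd f0) walls"]
    base_point_in_Delta assms
  by (simp add: Delta_below_eq_chamber[symmetric])

lemma closure_Delta_below:
  assumes "afn f0 base_point < t"
  shows "closure (\<Delta> \<inter> {x. afn f0 x < t}) = closure \<Delta> \<inter> {x. afn f0 x \<le> t}"
proof -
  have "{x. 0 \<le> afn (- fst f0, t - snd f0) x} = {x. afn f0 x \<le> t}" by (auto simp: afn_def)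
  then show ?thesis
    by (simp add: closure_Delta_below_eq_closed_chamber[OF assms] closed_chamber_insert
        closure_Delta Int_commute)
qed

lemma compact_closure_Delta_below: "compact (closure (\<Delta> \<inter> {x. afn f0 x < t}))"
proof -
  obtain R where R: "\<forall>x\<in>\<Delta>. R \<le> norm x \<longrightarrow> t \<le> afn f0 x"
    using growing unfolding growing_def by blast
  then have "\<Delta> \<inter> {x. afn f0 x < t} \<subseteq> cball 0 R" by (auto simp: not_le less_imp_le)
  then have "bounded (\<Delta> \<inter> {x. afn f0 x < t})" by (rule bounded_subset[OF bounded_cball])
  then show ?thesis by (rule compact_closure[THEN iffD2])
qed

lemma max_abs_set_Delta_below_nonempty:
  assumes "afn f0 base_point < t"
  obtains y where "y \<in> max_abs_set (\<Delta> \<inter> {x. afn f0 x < t}) (afn f)"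
proof -
  let ?C = "closure (\<Delta> \<inter> {x. afn f0 x < t})"
  have "?C \<noteq> {}" using base_point_in_Delta assms closure_subset by blast
  moreover have "continuous_on ?C (\<lambda>x. \<bar>afn f x\<bar>)" by (intro continuous_intros)
  ultimately obtain y where "y \<in> ?C" "\<forall>x\<in>?C. \<bar>afn f x\<bar> \<le> \<bar>afn f y\<bar>"
    using continuous_attains_sup[OF compact_closure_Delta_below] by blast
  then show ?thesis using that unfolding max_abs_set_def by blast
qed

lemma face_subset_closure_Delta_below:
  assumes "afn f0 base_point < t" "y \<in> closure (\<Delta> \<inter> {x. afn f0 x < t})"
  shows "{z\<in>UNIV. \<forall>\<psi>\<in>afn ` add_level A f0 t. sgn (\<psi> z) = sgn (\<psi> y)}
    \<subseteq> closure (\<Delta> \<inter> {x. afn f0 x < t})"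
proof -
  let ?Q = "insert (- fst f0, t - snd f0) walls"
  have "\<forall>q\<in>?Q. \<exists>p\<in>add_level A f0 t. \<exists>c. \<forall>x. afn q x = c * afn p x"
  proof
    fix q assume "q \<in> ?Q"
    then consider "q = (- fst f0, t - snd f0)"
      | p where "p \<in> A" "q = (side p *\<^sub>R fst p, side p * snd p)"
      unfolding walls_def by blast
    then show "\<exists>p\<in>add_level A f0 t. \<exists>c. \<forall>x. afn q x = c * afn p x"
    proof cases
      case 1
      then have "\<forall>x. afn q x = (-1) * afn (fst f0, snd f0 - t) x" by (simp add: afn_def)
      then show ?thesis unfolding add_level_def by blast
    next
      case 2
      then show ?thesis unfolding add_level_def using afn_scale by blast
    qed
  qed
  then show ?thesis
    using face_subset_closed_chamber assms(2)
    unfolding closure_Delta_below_eq_closed_chamber[OF assms(1)] by blast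
qed

definition "level_max t = (SUP x\<in>closure (\<Delta> \<inter> {x. afn f0 x < t}). \<bar>afn f x\<bar>)"

lemma c_bdd_eq:
  assumes "afn f0 base_point < t"
  shows "c_bdd (\<lambda>x. exp (\<alpha> * (complex_of_real (ln \<bar>afn f x\<bar>) + \<i> * complex_of_real \<theta>)))
      (add_level A f0 t) f (\<Delta> \<inter> {x. afn f0 x < t})
    = exp (\<alpha> * (complex_of_real (ln (level_max t)) + \<i> * complex_of_real \<theta>))"
proof -
  let ?D = "\<Delta> \<inter> {x. afn f0 x < t}"
  obtain y where y: "y \<in> max_abs_set ?D (afn f)"
    using max_abs_set_Delta_below_nonempty[OF assms] .
  have "finite (afn ` add_level A f0 t)" unfolding add_level_def using finite_A by simp
  moreover have "\<forall>\<psi>\<in>insert (afn f) (afn ` add_level A f0 t). affine_on UNIV \<psi>"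
    using affine_on_afn by blast
  moreover have "{z\<in>UNIV. \<forall>\<psi>\<in>afn ` add_level A f0 t. sgn (\<psi> z) = sgn (\<psi> y)} \<subseteq> closure ?D"
    using face_subset_closure_Delta_below[OF assms] y unfolding max_abs_set_def by blast
  ultimately obtain z where z: "z \<in> max_abs_set ?D (afn f)"
    and val: "face_value (ext_support (faces (add_level A f0 t)) ?D (afn f))
      (\<lambda>x. exp (\<alpha> * (complex_of_real (ln \<bar>afn f x\<bar>) + \<i> * complex_of_real \<theta>)))
      = exp (\<alpha> * (complex_of_real (ln \<bar>afn f z\<bar>) + \<i> * complex_of_real \<theta>))"
    using face_value_ext_support[OF _ affine_UNIV _ _ y] unfolding faces_def by blast
  have "level_max t = \<bar>afn f z\<bar>"
    unfolding level_max_def by (rule Sup_abs_eq_max_abs_set[OF z])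
  then show ?thesis unfolding c_bdd_def val by simp
qed

lemma level_max_attained:
  assumes "afn f0 base_point < t"
  obtains y where "y \<in> closure \<Delta>" "afn f0 y \<le> t" "level_max t = \<bar>afn f y\<bar>"
    "\<And>x. x \<in> closure \<Delta> \<Longrightarrow> afn f0 x \<le> t \<Longrightarrow> \<bar>afn f x\<bar> \<le> \<bar>afn f y\<bar>"
proof -
  obtain y where y: "y \<in> max_abs_set (\<Delta> \<inter> {x. afn f0 x < t}) (afn f)"
    using max_abs_set_Delta_below_nonempty[OF assms] .
  moreover have "level_max t = \<bar>afn f y\<bar>"
    unfolding level_max_def by (rule Sup_abs_eq_max_abs_set[OF y])
  ultimately show ?thesis
    using that unfolding max_abs_set_def closure_Delta_below[OF assms] by blast
qed

lemma level_max_upper: "\<exists>C. \<forall>t>afn f0 base_point. level_max t \<le> growth_rate * t + C"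
proof -
  obtain C where C: "\<forall>x\<in>closure \<Delta>. \<bar>afn f x\<bar> \<le> growth_rate * afn f0 x + C"
    using abs_f_le by blast
  have "level_max t \<le> growth_rate * t + C" if t: "afn f0 base_point < t" for t
  proof -
    obtain y where y: "y \<in> closure \<Delta>" "afn f0 y \<le> t" "level_max t = \<bar>afn f y\<bar>"
      using level_max_attained[OF t] by blast
    have "growth_rate * afn f0 y \<le> growth_rate * t"
      using y(2) growth_rate_pos by (intro mult_left_mono) auto
    then show ?thesis using C y(1,3) by fastforce
  qed
  then show ?thesis by blast
qed

lemma level_max_lower:
  assumes t: "afn f0 base_point < t"
  shows "growth_rate * (t - afn f0 base_point) - \<bar>afn f base_point\<bar> \<le> level_max t"
proof -
  obtain y where y: "level_max t = \<bar>afn f y\<bar>"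
    "\<And>x. x \<in> closure \<Delta> \<Longrightarrow> afn f0 x \<le> t \<Longrightarrow> \<bar>afn f x\<bar> \<le> \<bar>afn f y\<bar>"
    using level_max_attained[OF t] by blast
  define x where "x = base_point + (t - afn f0 base_point) *\<^sub>R max_dir"
  have "max_dir \<in> rec_cone walls" "fst f0 \<bullet> max_dir = 1"
    using max_dir_maximal(1) unfolding asym_dirs_def chart_def by auto
  then have "x \<in> \<Delta>" "afn f0 x = t"
    using Delta_add_rec_cone[OF base_point_in_Delta] t unfolding x_def afn_ray by auto
  then have "\<bar>afn f x\<bar> \<le> level_max t" using y closure_subset by fastforce
  moreover have "\<bar>afn f x\<bar> = \<bar>afn f base_point + (t - afn f0 base_point) * (fst f \<bullet> max_dir)\<bar>"
    unfolding x_def afn_ray ..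
  moreover have
    "\<bar>(t - afn f0 base_point) * (fst f \<bullet> max_dir)\<bar> = growth_rate * (t - afn f0 base_point)"
    using t unfolding growth_rate_def by (simp add: abs_mult)
  ultimately show ?thesis by linarith
qed

lemma level_max_asymp: "((\<lambda>t. level_max t / t) \<longlongrightarrow> growth_rate) at_top"
proof -
  obtain C where C: "\<forall>t>afn f0 base_point. level_max t \<le> growth_rate * t + C"
    using level_max_upper by blast
  define B where "B = \<bar>C\<bar> + growth_rate * \<bar>afn f0 base_point\<bar> + \<bar>afn f base_point\<bar>"
  have "\<bar>level_max t - growth_rate * t\<bar> \<le> B" if "afn f0 base_point < t" for t
  proof -
    have "level_max t \<le> growth_rate * t + C" using C that by blast
    moreover have
      "growth_rate * t - growth_rate * afn f0 base_point - \<bar>afn f base_point\<bar> \<le> level_max t"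
      using level_max_lower[OF that] by (simp add: right_diff_distrib)
    moreover have "growth_rate * afn f0 base_point \<le> growth_rate * \<bar>afn f0 base_point\<bar>"
      using growth_rate_pos by (intro mult_left_mono) auto
    moreover have "0 \<le> growth_rate * \<bar>afn f0 base_point\<bar>" using growth_rate_pos by simp
    ultimately show ?thesis
      unfolding B_def using abs_ge_self[of C] by (intro abs_leI) linarith+
  qed
  then have "\<forall>\<^sub>F t in at_top. norm ((level_max t - growth_rate * t) / t) \<le> B / t"
    using eventually_gt_at_top[of "max 0 (afn f0 base_point)"]
    by (auto elim!: eventually_mono simp: abs_div divide_right_mono)
  moreover have "((\<lambda>t. B / t) \<longlongrightarrow> 0) at_top"
    by (rule tendsto_divide_0[OF tendsto_const
        filterlim_at_top_imp_at_infinity[OF filterlim_ident]])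
  ultimately have "((\<lambda>t. (level_max t - growth_rate * t) / t) \<longlongrightarrow> 0) at_top"
    by (rule Lim_null_comparison)
  then have "((\<lambda>t. growth_rate + (level_max t - growth_rate * t) / t) \<longlongrightarrow> growth_rate) at_top"
    using tendsto_add[OF tendsto_const] by fastforce
  moreover have
    "\<forall>\<^sub>F t in at_top. growth_rate + (level_max t - growth_rate * t) / t = level_max t / t"
    using eventually_gt_at_top[of 0] by eventually_elim (simp add: field_simps)
  ultimately show ?thesis by (rule Lim_transform_eventually)
qed

end

theorem corollary1:
  fixes A :: "('v::euclidean_space \<times> real) set"
    and f0 f :: "'v \<times> real"
    and \<Delta> :: "'v set"
    and \<alpha> :: complex and \<theta> :: real
  assumes "arrangement A"
    and "essential A"
    and "fst f0 \<noteq> 0"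
    and "f \<in> A"
    and "growing A f0 \<Delta>"
    and "\<not> bounded ((\<lambda>x. \<bar>afn f x\<bar>) ` \<Delta>)"
  shows "\<exists>e :: real \<Rightarrow> complex. (e \<longlongrightarrow> 0) at_top \<and>
     (\<forall>\<^sub>F t in at_top.
        c_bdd (\<lambda>x. exp (\<alpha> * (complex_of_real (ln \<bar>afn f x\<bar>) + \<i> * complex_of_real \<theta>)))
              (add_level A f0 t) f (\<Delta> \<inter> {x. afn f0 x < t})
        = c_inf \<alpha> \<theta> A f f0 \<Delta> * exp (\<alpha> * complex_of_real (ln t)) * (1 + e t))"
proof -
  interpret growing_domain A f0 f \<Delta> using assms(1,5,6) by unfold_locales
  define e where
    "e t = exp (\<alpha> * complex_of_real (ln (level_max t) - ln growth_rate - ln t)) - 1" for t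
  have "(e \<longlongrightarrow> 0) at_top"
    using tendsto_diff[OF tendsto_exp_ln_ratio[OF level_max_asymp growth_rate_pos]
        tendsto_const[of 1]]
    unfolding e_def by simp
  moreover have "\<forall>\<^sub>F t in at_top.
      c_bdd (\<lambda>x. exp (\<alpha> * (complex_of_real (ln \<bar>afn f x\<bar>) + \<i> * complex_of_real \<theta>)))
        (add_level A f0 t) f (\<Delta> \<inter> {x. afn f0 x < t})
      = c_inf \<alpha> \<theta> A f f0 \<Delta> * exp (\<alpha> * complex_of_real (ln t)) * (1 + e t)"
    using eventually_gt_at_top[of "afn f0 base_point"]
  proof eventually_elim
    case (elim t)
    have "1 + e t = exp (\<alpha> * complex_of_real (ln (level_max t) - ln growth_rate - ln t))"
      by (simp add: e_def)
    then show ?case by (simp only: c_bdd_eq[OF elim] c_inf_eq exp_ln_recombine)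
  qed
  ultimately show ?thesis by blast
qed

end
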